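(* Let $\mathcal{A}$ be a non-unital normed algebra possessing an approximate identity, and let $\mathcal{I}_r(\mathcal{A})$ denote the set of all closed proper right ideals of $\mathcal{A}$. Then $$\mathrm{AppInv}_r(\mathcal{A})=\mathcal{A}\setminus\bigcup_{I\in\mathcal{I}_r(\mathcal{A})} I .$$
   Context: An approximate identity in a normed algebra $\mathcal{A}$ is a net $(e_j)_{j\in J}$ in $\mathcal{A}$ such that $\lim_{j} e_j y=\lim_j y e_j=y$ for every $y\in\mathcal{A}$. An element $x\in\mathcal{A}$ is approximately right invertible if there is a net $(r_j)_{j\in J}$ in $\mathcal{A}$ such that $(xr_j)_{j\in J}$ is an approximate identity in $\mathcal{A}$. $\mathrm{AppInv}_r(\mathcal{A})$ denotes the set of approximately right invertible elements of $\mathcal{A}$. *)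

theory Defs
  imports Complex_Main
begin

definition directed :: "'j set \<Rightarrow> ('j \<Rightarrow> 'j \<Rightarrow> bool) \<Rightarrow> bool" where
  "directed J le \<longleftrightarrow> J \<noteq> {} \<and> (\<forall>i\<in>J. le i i) \<and>
     (\<forall>i\<in>J. \<forall>j\<in>J. \<forall>k\<in>J. le i j \<longrightarrow> le j k \<longrightarrow> le i k) \<and>
     (\<forall>i\<in>J. \<forall>j\<in>J. \<exists>k\<in>J. le i k \<and> le j k)"

definition net_tendsto :: "'j set \<Rightarrow> ('j \<Rightarrow> 'j \<Rightarrow> bool) \<Rightarrow> ('j \<Rightarrow> 'a::metric_space) \<Rightarrow> 'a \<Rightarrow> bool" where
  "net_tendsto J le f l \<longleftrightarrow> (\<forall>\<epsilon>>0. \<exists>j0\<in>J. \<forall>j\<in>J. le j0 j \<longrightarrow> dist (f j) l < \<epsilon>)"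

definition approx_identity :: "'j set \<Rightarrow> ('j \<Rightarrow> 'j \<Rightarrow> bool) \<Rightarrow> ('j \<Rightarrow> 'a::real_normed_algebra) \<Rightarrow> bool" where
  "approx_identity J le e \<longleftrightarrow>
     (\<forall>y. net_tendsto J le (\<lambda>j. e j * y) y \<and> net_tendsto J le (\<lambda>j. y * e j) y)"

text \<open>Index type for nets over the algebra 'a. Every net in 'a can be reindexed
  (via its tail filter) by a directed subset of this type, so no generality is lost.\<close>
type_synonym 'a net_index = "'a set \<times> 'a"

definition has_approx_identity :: "'a::real_normed_algebra itself \<Rightarrow> bool" where
  "has_approx_identity _ \<longleftrightarrow>
     (\<exists>(J :: 'a net_index set) le (e :: 'a net_index \<Rightarrow> 'a). directed J le \<and> approx_identity J le e)"

definition AppInv_r :: "'a::real_normed_algebra set" where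
  "AppInv_r = {x. \<exists>(J :: 'a net_index set) le (r :: 'a net_index \<Rightarrow> 'a).
                    directed J le \<and> approx_identity J le (\<lambda>j. x * r j)}"

definition right_ideal :: "'a::real_normed_algebra set \<Rightarrow> bool" where
  "right_ideal I \<longleftrightarrow> 0 \<in> I \<and> (\<forall>x\<in>I. \<forall>y\<in>I. x + y \<in> I) \<and>
     (\<forall>c::real. \<forall>x\<in>I. c *\<^sub>R x \<in> I) \<and> (\<forall>x\<in>I. \<forall>a. x * a \<in> I)"

definition closed_proper_right_ideals :: "'a::real_normed_algebra set set" where
  "closed_proper_right_ideals = {I. right_ideal I \<and> closed I \<and> I \<noteq> UNIV}"

end

theory Submission
  imports Defs "HOL-Analysis.Analysis"
begin

(* If x r_j is an approximate identity, then x r_j y \<rightarrow> y exhibits every y as a limit of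
   elements of any right ideal containing x, so no closed proper right ideal contains x.
   Conversely, if x lies in no closed proper right ideal, then the closure of the right ideal
   xA is everything, because it is a closed right ideal and contains x = lim x e_j. Hence every
   e_j can be approximated by some x r; such an x r acts as a unit up to any prescribed error
   on any finite set, and indexing these choices by (finite set, error) yields an approximate
   identity of the form x r_j. *)

lemma directed_nonempty: "directed J le \<Longrightarrow> \<exists>j. j \<in> J"
  unfolding directed_def by blast

lemma directed_refl: "directed J le \<Longrightarrow> j \<in> J \<Longrightarrow> le j j"
  unfolding directed_def by blast

lemma directed_trans: "directed J le \<Longrightarrow> i \<in> J \<Longrightarrow> j \<in> J \<Longrightarrow> k \<in> J \<Longrightarrow> le i j \<Longrightarrow> le j k \<Longrightarrow> le i k"
  unfolding directed_def by blast

lemma directed_upper_bound: "directed J le \<Longrightarrow> i \<in> J \<Longrightarrow> j \<in> J \<Longrightarrow> \<exists>k\<in>J. le i k \<and> le j k"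
  unfolding directed_def by blast

lemma directed_eventually_ex:
  assumes d: "directed J le" and "\<exists>j0\<in>J. \<forall>j\<in>J. le j0 j \<longrightarrow> P j"
  shows "\<exists>j\<in>J. P j"
proof -
  obtain j0 where "j0 \<in> J" "\<forall>j\<in>J. le j0 j \<longrightarrow> P j"
    using assms(2) by blast
  moreover have "le j0 j0"
    using directed_refl[OF d \<open>j0 \<in> J\<close>] .
  ultimately show ?thesis
    by blast
qed

lemma directed_eventually_conj:
  assumes d: "directed J le"
    and "\<exists>j0\<in>J. \<forall>j\<in>J. le j0 j \<longrightarrow> P j" "\<exists>j0\<in>J. \<forall>j\<in>J. le j0 j \<longrightarrow> Q j"
  shows "\<exists>j0\<in>J. \<forall>j\<in>J. le j0 j \<longrightarrow> P j \<and> Q j"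
proof -
  obtain j1 j2 where j1: "j1 \<in> J" "\<forall>j\<in>J. le j1 j \<longrightarrow> P j"
    and j2: "j2 \<in> J" "\<forall>j\<in>J. le j2 j \<longrightarrow> Q j"
    using assms(2,3) by blast
  obtain k where k: "k \<in> J" "le j1 k" "le j2 k"
    using directed_upper_bound[OF d j1(1) j2(1)] by blast
  have "P j \<and> Q j" if "j \<in> J" "le k j" for j
  proof -
    have "le j1 j" "le j2 j"
      using directed_trans[OF d j1(1) k(1) that(1) k(2) that(2)]
        directed_trans[OF d j2(1) k(1) that(1) k(3) that(2)] .
    then show ?thesis
      using j1(2) j2(2) that(1) by blast
  qed
  with k(1) show ?thesis by blast
qed

lemma directed_eventually_ball_finite:
  assumes d: "directed J le" and "finite F"
    and ev: "\<And>y. y \<in> F \<Longrightarrow> \<exists>j0\<in>J. \<forall>j\<in>J. le j0 j \<longrightarrow> P y j"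
  shows "\<exists>j0\<in>J. \<forall>j\<in>J. le j0 j \<longrightarrow> (\<forall>y\<in>F. P y j)"
  using \<open>finite F\<close> ev
proof (induction F rule: finite_induct)
  case empty
  then show ?case using directed_nonempty[OF d] by blast
next
  case (insert y F)
  have "\<exists>j0\<in>J. \<forall>j\<in>J. le j0 j \<longrightarrow> P y j \<and> (\<forall>z\<in>F. P z j)"
    using directed_eventually_conj[OF d insert.prems[of y] insert.IH] insert.prems by blast
  then show ?case by simp
qed

lemma approx_identity_uniform_on_finite:
  assumes "directed J le" "approx_identity J le e" "finite F" "\<epsilon> > 0"
  shows "\<exists>j0\<in>J. \<forall>j\<in>J. le j0 j \<longrightarrow> (\<forall>y\<in>F. dist (e j * y) y < \<epsilon> \<and> dist (y * e j) y < \<epsilon>)"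
  using assms unfolding approx_identity_def net_tendsto_def
  by (intro directed_eventually_ball_finite directed_eventually_conj) auto

lemma net_tendsto_in_closure:
  assumes "directed J le" "net_tendsto J le f l" "\<And>j. j \<in> J \<Longrightarrow> f j \<in> S"
  shows "l \<in> closure S"
  unfolding closure_approachable
proof (intro allI impI)
  fix \<epsilon> :: real assume "\<epsilon> > 0"
  with assms(2) have "\<exists>j0\<in>J. \<forall>j\<in>J. le j0 j \<longrightarrow> dist (f j) l < \<epsilon>"
    unfolding net_tendsto_def by blast
  with assms(3) show "\<exists>y\<in>S. dist y l < \<epsilon>"
    using directed_eventually_ex[OF assms(1)] by blast
qed

lemma right_ideal_zero: "right_ideal I \<Longrightarrow> 0 \<in> I"
  unfolding right_ideal_def by blast

lemma right_ideal_add: "right_ideal I \<Longrightarrow> x \<in> I \<Longrightarrow> y \<in> I \<Longrightarrow> x + y \<in> I"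
  unfolding right_ideal_def by blast

lemma right_ideal_scaleR: "right_ideal I \<Longrightarrow> x \<in> I \<Longrightarrow> c *\<^sub>R x \<in> I"
  unfolding right_ideal_def by blast

lemma right_ideal_mult_right: "right_ideal I \<Longrightarrow> x \<in> I \<Longrightarrow> x * a \<in> I"
  unfolding right_ideal_def by blast

lemma LIMSEQ_in_closure:
  fixes f :: "nat \<Rightarrow> 'a::metric_space"
  assumes "\<forall>n. f n \<in> S" "f \<longlonglongrightarrow> l"
  shows "l \<in> closure S"
  unfolding closure_sequential using assms by blast

lemma right_ideal_closure:
  assumes I: "right_ideal I"
  shows "right_ideal (closure I)"
  unfolding right_ideal_def
proof (intro conjI ballI allI)
  show "0 \<in> closure I"
    using right_ideal_zero[OF I] closure_subset by blast
next
  fix u v assume "u \<in> closure I" "v \<in> closure I"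
  then obtain f g where f: "\<forall>n. f n \<in> I" "f \<longlonglongrightarrow> u" and g: "\<forall>n. g n \<in> I" "g \<longlonglongrightarrow> v"
    using closure_sequential[of u I] closure_sequential[of v I] by metis
  have "\<forall>n. f n + g n \<in> I"
    using right_ideal_add[OF I] f(1) g(1) by blast
  moreover have "(\<lambda>n. f n + g n) \<longlonglongrightarrow> u + v"
    using f(2) g(2) by (rule tendsto_add)
  ultimately show "u + v \<in> closure I"
    by (rule LIMSEQ_in_closure)
next
  fix c :: real and u assume "u \<in> closure I"
  then obtain f where f: "\<forall>n. f n \<in> I" "f \<longlonglongrightarrow> u"
    using closure_sequential[of u I] by metis
  have "\<forall>n. c *\<^sub>R f n \<in> I"
    using right_ideal_scaleR[OF I] f(1) by blast
  moreover have "(\<lambda>n. c *\<^sub>R f n) \<longlonglongrightarrow> c *\<^sub>R u"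
    using tendsto_scaleR[OF tendsto_const f(2)] .
  ultimately show "c *\<^sub>R u \<in> closure I"
    by (rule LIMSEQ_in_closure)
next
  fix u a assume "u \<in> closure I"
  then obtain f where f: "\<forall>n. f n \<in> I" "f \<longlonglongrightarrow> u"
    using closure_sequential[of u I] by metis
  have "\<forall>n. f n * a \<in> I"
    using right_ideal_mult_right[OF I] f(1) by blast
  moreover have "(\<lambda>n. f n * a) \<longlonglongrightarrow> u * a"
    using f(2) by (rule tendsto_mult_right)
  ultimately show "u * a \<in> closure I"
    by (rule LIMSEQ_in_closure)
qed

lemma right_ideal_range_mult_left: "right_ideal (range (\<lambda>a. x * a))"
  unfolding right_ideal_def
proof (intro conjI ballI allI)
  show "0 \<in> range (\<lambda>a. x * a)"
    by (intro range_eqI[of _ _ 0]) simp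
next
  fix u v assume "u \<in> range (\<lambda>a. x * a)" "v \<in> range (\<lambda>a. x * a)"
  then obtain a b where "u = x * a" "v = x * b"
    by blast
  then show "u + v \<in> range (\<lambda>a. x * a)"
    by (intro range_eqI[of _ _ "a + b"]) (simp add: distrib_left)
next
  fix c :: real and u assume "u \<in> range (\<lambda>a. x * a)"
  then obtain a where "u = x * a"
    by blast
  then show "c *\<^sub>R u \<in> range (\<lambda>a. x * a)"
    by (intro range_eqI[of _ _ "c *\<^sub>R a"]) simp
next
  fix u b assume "u \<in> range (\<lambda>a. x * a)"
  then obtain a where "u = x * a"
    by blast
  then show "u * b \<in> range (\<lambda>a. x * a)"
    by (intro range_eqI[of _ _ "a * b"]) (simp add: mult.assoc)
qed

lemma closed_right_ideal_eq_UNIV_if_AppInv_r: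
  fixes x :: "'a::real_normed_algebra"
  assumes "x \<in> AppInv_r" "right_ideal I" "closed I" "x \<in> I"
  shows "I = UNIV"
proof -
  from assms(1) obtain J :: "'a net_index set" and le r
    where d: "directed J le" and ai: "approx_identity J le (\<lambda>j. x * r j)"
    unfolding AppInv_r_def by blast
  have "y \<in> I" for y
  proof -
    have "net_tendsto J le (\<lambda>j. x * (r j * y)) y"
      using ai unfolding approx_identity_def by (simp add: mult.assoc)
    moreover have "x * (r j * y) \<in> I" for j
      using right_ideal_mult_right[OF assms(2,4)] .
    ultimately have "y \<in> closure I"
      using net_tendsto_in_closure[OF d] by blast
    with \<open>closed I\<close> show ?thesis by simp
  qed
  then show ?thesis by blast
qed

lemma closure_range_mult_left_eq_UNIV:
  fixes x :: "'a::real_normed_algebra" and e :: "'j \<Rightarrow> 'a"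
  assumes d: "directed J le" and ai: "approx_identity J le e"
    and x: "x \<notin> \<Union> closed_proper_right_ideals"
  shows "closure (range (\<lambda>a. x * a)) = UNIV"
proof -
  have "net_tendsto J le (\<lambda>j. x * e j) x"
    using ai unfolding approx_identity_def by blast
  then have "x \<in> closure (range (\<lambda>a. x * a))"
    by (rule net_tendsto_in_closure[OF d]) blast
  moreover have "right_ideal (closure (range (\<lambda>a. x * a)))"
    by (rule right_ideal_closure[OF right_ideal_range_mult_left])
  ultimately show ?thesis
    using x unfolding closed_proper_right_ideals_def by blast
qed

lemma dist_mult_left_le:
  fixes u y e :: "'a::real_normed_algebra"
  shows "dist (u * y) y \<le> norm (u - e) * norm y + dist (e * y) y"
proof -
  have "u * y - y = (u - e) * y + (e * y - y)"
    by (simp add: left_diff_distrib)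
  then have "dist (u * y) y \<le> norm ((u - e) * y) + dist (e * y) y"
    by (metis dist_norm norm_triangle_ineq)
  then show ?thesis
    using norm_mult_ineq[of "u - e" y] by linarith
qed

lemma dist_mult_right_le:
  fixes u y e :: "'a::real_normed_algebra"
  shows "dist (y * u) y \<le> norm (u - e) * norm y + dist (y * e) y"
proof -
  have "y * u - y = y * (u - e) + (y * e - y)"
    by (simp add: right_diff_distrib)
  then have "dist (y * u) y \<le> norm (y * (u - e)) + dist (y * e) y"
    by (metis dist_norm norm_triangle_ineq)
  then show ?thesis
    using norm_mult_ineq[of y "u - e"] by (simp add: mult.commute)
qed

lemma dense_set_has_local_units:
  fixes e :: "'j \<Rightarrow> 'a::real_normed_algebra" and U F :: "'a set"
  assumes d: "directed J le" and ai: "approx_identity J le e"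
    and dense: "closure U = UNIV" and "finite F" "\<epsilon> > 0"
  shows "\<exists>u\<in>U. \<forall>y\<in>F. dist (u * y) y < \<epsilon> \<and> dist (y * u) y < \<epsilon>"
proof -
  define M where "M = (\<Sum>y\<in>F. norm y) + 1"
  have M: "M > 0" "\<And>y. y \<in> F \<Longrightarrow> norm y \<le> M"
  proof -
    show "M > 0"
      unfolding M_def by (simp add: add_nonneg_pos sum_nonneg)
    show "norm y \<le> M" if "y \<in> F" for y
      using member_le_sum[of y F norm] that \<open>finite F\<close> unfolding M_def by simp
  qed
  obtain j where ej: "\<forall>y\<in>F. dist (e j * y) y < \<epsilon> / 2 \<and> dist (y * e j) y < \<epsilon> / 2"
    using directed_eventually_ex[OF d approx_identity_uniform_on_finite[OF d ai \<open>finite F\<close>]]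
      \<open>\<epsilon> > 0\<close> by (metis half_gt_zero)
  have "\<epsilon> / (2 * M) > 0"
    using \<open>\<epsilon> > 0\<close> M(1) by simp
  then obtain u where u: "u \<in> U" "dist u (e j) < \<epsilon> / (2 * M)"
    using closure_approachableD[of "e j" U] dense by (auto simp: dist_commute)
  have small: "norm (u - e j) * norm y < \<epsilon> / 2" if "y \<in> F" for y
  proof -
    have "norm (u - e j) * norm y \<le> norm (u - e j) * M"
      using M(2)[OF that] by (simp add: mult_left_mono)
    also have "\<dots> < \<epsilon> / (2 * M) * M"
      using u(2) M(1) by (intro mult_strict_right_mono) (auto simp: dist_norm)
    also have "\<dots> = \<epsilon> / 2"
      using M(1) by simp
    finally show ?thesis .
  qed
  have "dist (u * y) y < \<epsilon> \<and> dist (y * u) y < \<epsilon>" if "y \<in> F" for y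
    using dist_mult_left_le[of u y "e j"] dist_mult_right_le[of y u "e j"] small[OF that] ej that
    by fastforce
  with u(1) show ?thesis by blast
qed

lemma directed_finite_subsets_tolerances:
  fixes a :: "'a::real_normed_vector"
  assumes "a \<noteq> 0"
  shows "directed {(F :: 'b set, z :: 'a). finite F \<and> z \<noteq> 0}
    (\<lambda>(F, z) (G, w). F \<subseteq> G \<and> norm w \<le> norm z)"
  unfolding directed_def
proof (intro conjI ballI impI)
  show "{(F :: 'b set, z :: 'a). finite F \<and> z \<noteq> 0} \<noteq> {}"
    using assms by blast
next
  fix i j assume "i \<in> {(F :: 'b set, z :: 'a). finite F \<and> z \<noteq> 0}"
    "j \<in> {(F :: 'b set, z :: 'a). finite F \<and> z \<noteq> 0}"
  moreover obtain F z G w where "i = (F, z)" "j = (G, w)"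
    by fastforce
  ultimately show "\<exists>k\<in>{(F :: 'b set, z :: 'a). finite F \<and> z \<noteq> 0}.
      (\<lambda>(F, z) (G, w). F \<subseteq> G \<and> norm w \<le> norm z) i k \<and>
      (\<lambda>(F, z) (G, w). F \<subseteq> G \<and> norm w \<le> norm z) j k"
    by (intro bexI[of _ "(F \<union> G, if norm z \<le> norm w then z else w)"]) auto
qed auto

text \<open>The index type offers no reals, so a tolerance \<epsilon> is encoded by an element of norm \<epsilon>.
  This is the only reason a nonzero element, and hence non-unitality in the main theorem, is needed.\<close>

lemma approx_identity_from_local_units:
  fixes f :: "'b \<Rightarrow> 'a::real_normed_algebra"
  assumes "a \<noteq> (0 :: 'a)"
    and local: "\<And>F \<epsilon>. finite F \<Longrightarrow> \<epsilon> > 0 \<Longrightarrow>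
      \<exists>r. \<forall>y\<in>F. dist (f r * y) y < \<epsilon> \<and> dist (y * f r) y < \<epsilon>"
  shows "\<exists>(J :: 'a net_index set) le r. directed J le \<and> approx_identity J le (\<lambda>j. f (r j))"
proof -
  define J :: "'a net_index set" where "J = {(F, z). finite F \<and> z \<noteq> 0}"
  define le :: "'a net_index \<Rightarrow> 'a net_index \<Rightarrow> bool"
    where "le = (\<lambda>(F, z) (G, w). F \<subseteq> G \<and> norm w \<le> norm z)"
  have "\<exists>r. \<forall>y\<in>fst i. dist (f r * y) y < norm (snd i) \<and> dist (y * f r) y < norm (snd i)"
    if "i \<in> J" for i
    using local[of "fst i" "norm (snd i)"] that unfolding J_def by auto
  then obtain r where r: "\<forall>i\<in>J. \<forall>y\<in>fst i.
      dist (f (r i) * y) y < norm (snd i) \<and> dist (y * f (r i)) y < norm (snd i)"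
    using bchoice[OF ballI] by metis
  have "directed J le"
    using directed_finite_subsets_tolerances[OF assms(1)] unfolding J_def le_def .
  moreover have "approx_identity J le (\<lambda>j. f (r j))"
    unfolding approx_identity_def net_tendsto_def
  proof (intro allI conjI impI)
    fix y :: 'a and \<epsilon> :: real assume "\<epsilon> > 0"
    define z where "z = (\<epsilon> / norm a) *\<^sub>R a"
    have z: "norm z = \<epsilon>" "({y}, z) \<in> J"
      using assms(1) \<open>\<epsilon> > 0\<close> unfolding z_def J_def by auto
    have close: "dist (f (r j) * y) y < \<epsilon> \<and> dist (y * f (r j)) y < \<epsilon>"
      if "j \<in> J" "le ({y}, z) j" for j
    proof -
      obtain G w where j: "j = (G, w)"
        by fastforce
      with that z(1) have "y \<in> G" "norm w \<le> \<epsilon>"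
        unfolding le_def by auto
      moreover have "dist (f (r j) * y) y < norm w \<and> dist (y * f (r j)) y < norm w"
        using r that(1) \<open>y \<in> G\<close> unfolding j by auto
      ultimately show ?thesis
        by linarith
    qed
    show "\<exists>j0\<in>J. \<forall>j\<in>J. le j0 j \<longrightarrow> dist (f (r j) * y) y < \<epsilon>"
      using close z(2) by blast
    show "\<exists>j0\<in>J. \<forall>j\<in>J. le j0 j \<longrightarrow> dist (y * f (r j)) y < \<epsilon>"
      using close z(2) by blast
  qed
  ultimately show ?thesis
    by blast
qed

theorem theorem2p10:
  assumes nonunital: "\<not> (\<exists>u::'a::real_normed_algebra. \<forall>y. u * y = y \<and> y * u = y)"
    and approx: "has_approx_identity TYPE('a)"
  shows "(AppInv_r :: 'a set) = UNIV - \<Union> closed_proper_right_ideals"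
proof (intro set_eqI iffI)
  fix x :: 'a assume "x \<in> AppInv_r"
  then show "x \<in> UNIV - \<Union> closed_proper_right_ideals"
    using closed_right_ideal_eq_UNIV_if_AppInv_r unfolding closed_proper_right_ideals_def by blast
next
  fix x :: 'a assume x: "x \<in> UNIV - \<Union> closed_proper_right_ideals"
  from approx obtain J :: "'a net_index set" and le and e :: "'a net_index \<Rightarrow> 'a"
    where d: "directed J le" and ai: "approx_identity J le e"
    unfolding has_approx_identity_def by blast
  have dense: "closure (range (\<lambda>a. x * a)) = UNIV"
    using closure_range_mult_left_eq_UNIV[OF d ai] x by blast
  obtain a :: 'a where "a \<noteq> 0"
    using nonunital by (metis mult_zero_left)
  moreover have "\<exists>r. \<forall>y\<in>F. dist (x * r * y) y < \<epsilon> \<and> dist (y * (x * r)) y < \<epsilon>"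
    if "finite F" "\<epsilon> > 0" for F and \<epsilon> :: real
    using dense_set_has_local_units[OF d ai dense that] by blast
  ultimately show "x \<in> AppInv_r"
    using approx_identity_from_local_units[of a "\<lambda>r. x * r"] unfolding AppInv_r_def by blast
qed

end
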